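(* Every finite tree $G$ is diagonal, i.e. $\mathrm{MH}_{k,l}(G)=0$ whenever $k\neq l$.
   Context: All graphs are finite, simple, undirected and connected; $d$ denotes the shortest-path distance on the vertex set $V(G)$. For vertices $x_0,\dots,x_k$ put $\ell(x_0,\dots,x_k)=\sum_{i=0}^{k-1}d(x_i,x_{i+1})$. The magnitude chain complex: $\mathrm{MC}_{k,l}(G)$ is the free abelian group on $I_{k,l}(G)=\{(x_0,\dots,x_k)\in V(G)^{k+1}: x_i\neq x_{i+1}\text{ for all } i,\ \ell(x_0,\dots,x_k)=l\}$, with differential $\partial:\mathrm{MC}_{k,l}(G)\to\mathrm{MC}_{k-1,l}(G)$, $\partial=\sum_{i=1}^{k-1}(-1)^i\partial_i$, where $\partial_i(x_0,\dots,x_k)=(x_0,\dots,\hat x_i,\dots,x_k)$ if $\ell(x_0,\dots,\hat x_i,\dots,x_k)=\ell(x_0,\dots,x_k)$ and $\partial_i(x_0,\dots,x_k)=0$ otherwise. The magnitude homology is $\mathrm{MH}_{k,l}(G)=H_k(\mathrm{MC}_{*,l}(G))$. A graph $G$ is called diagonal if $\mathrm{MH}_{k,l}(G)=0$ whenever $k\neq l$. *)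

theory Defs
  imports Main
begin

definition simple_graph :: "'a set \<Rightarrow> ('a \<Rightarrow> 'a \<Rightarrow> bool) \<Rightarrow> bool" where
  "simple_graph V E \<longleftrightarrow> finite V \<and> (\<forall>x y. E x y \<longrightarrow> x \<in> V \<and> y \<in> V)
     \<and> (\<forall>x y. E x y \<longrightarrow> E y x) \<and> (\<forall>x. \<not> E x x)"

definition walk :: "'a set \<Rightarrow> ('a \<Rightarrow> 'a \<Rightarrow> bool) \<Rightarrow> 'a list \<Rightarrow> bool" where
  "walk V E p \<longleftrightarrow> p \<noteq> [] \<and> set p \<subseteq> V \<and> (\<forall>i. Suc i < length p \<longrightarrow> E (p ! i) (p ! Suc i))"

definition connected_graph :: "'a set \<Rightarrow> ('a \<Rightarrow> 'a \<Rightarrow> bool) \<Rightarrow> bool" where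
  "connected_graph V E \<longleftrightarrow> V \<noteq> {} \<and>
     (\<forall>x\<in>V. \<forall>y\<in>V. \<exists>p. walk V E p \<and> hd p = x \<and> last p = y)"

definition is_cycle :: "'a set \<Rightarrow> ('a \<Rightarrow> 'a \<Rightarrow> bool) \<Rightarrow> 'a list \<Rightarrow> bool" where
  "is_cycle V E c \<longleftrightarrow> length c \<ge> 3 \<and> distinct c \<and> walk V E c \<and> E (last c) (hd c)"

definition is_tree :: "'a set \<Rightarrow> ('a \<Rightarrow> 'a \<Rightarrow> bool) \<Rightarrow> bool" where
  "is_tree V E \<longleftrightarrow> simple_graph V E \<and> connected_graph V E \<and> (\<nexists>c. is_cycle V E c)"

definition dist :: "'a set \<Rightarrow> ('a \<Rightarrow> 'a \<Rightarrow> bool) \<Rightarrow> 'a \<Rightarrow> 'a \<Rightarrow> nat" where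
  "dist V E x y = (LEAST n. \<exists>p. walk V E p \<and> hd p = x \<and> last p = y \<and> length p = Suc n)"

definition tlen :: "'a set \<Rightarrow> ('a \<Rightarrow> 'a \<Rightarrow> bool) \<Rightarrow> 'a list \<Rightarrow> nat" where
  "tlen V E xs = (\<Sum>i<length xs - 1. dist V E (xs ! i) (xs ! Suc i))"

definition Igen :: "'a set \<Rightarrow> ('a \<Rightarrow> 'a \<Rightarrow> bool) \<Rightarrow> nat \<Rightarrow> nat \<Rightarrow> 'a list set" where
  "Igen V E k l = {xs. length xs = Suc k \<and> set xs \<subseteq> V \<and>
      (\<forall>i<k. xs ! i \<noteq> xs ! Suc i) \<and> tlen V E xs = l}"

text \<open>MC_{k,l}(G): integer chains, i.e. finitely supported functions supported on I_{k,l}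
  (finite support is automatic as I_{k,l} is finite for finite graphs).\<close>
definition MC :: "'a set \<Rightarrow> ('a \<Rightarrow> 'a \<Rightarrow> bool) \<Rightarrow> nat \<Rightarrow> nat \<Rightarrow> ('a list \<Rightarrow> int) set" where
  "MC V E k l = {c. (\<forall>xs. c xs \<noteq> 0 \<longrightarrow> xs \<in> Igen V E k l) \<and> finite {xs. c xs \<noteq> 0}}"

definition face :: "nat \<Rightarrow> 'a list \<Rightarrow> 'a list" where
  "face i xs = take i xs @ drop (Suc i) xs"

definition bd :: "'a set \<Rightarrow> ('a \<Rightarrow> 'a \<Rightarrow> bool) \<Rightarrow> nat \<Rightarrow> nat \<Rightarrow> ('a list \<Rightarrow> int) \<Rightarrow> ('a list \<Rightarrow> int)" where
  "bd V E k l c = (\<lambda>ys. \<Sum>xs\<in>{xs. c xs \<noteq> 0}. c xs *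
      (\<Sum>i\<in>{1..<k}. if tlen V E (face i xs) = tlen V E xs \<and> face i xs = ys then (-1)^i else 0))"

text \<open>MH_{k,l}(G) = ker(d: MC_{k,l} -> MC_{k-1,l}) / im(d: MC_{k+1,l} -> MC_{k,l}) vanishes
  (for k = 0 the kernel is all of MC_{0,l}, as d on MC_0 is the empty sum).\<close>
definition MH_zero :: "'a set \<Rightarrow> ('a \<Rightarrow> 'a \<Rightarrow> bool) \<Rightarrow> nat \<Rightarrow> nat \<Rightarrow> bool" where
  "MH_zero V E k l \<longleftrightarrow> (\<forall>c\<in>MC V E k l. bd V E k l c = (\<lambda>_. 0) \<longrightarrow>
      (\<exists>b\<in>MC V E (Suc k) l. bd V E (Suc k) l b = c))"

definition diagonal :: "'a set \<Rightarrow> ('a \<Rightarrow> 'a \<Rightarrow> bool) \<Rightarrow> bool" where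
  "diagonal V E \<longleftrightarrow> (\<forall>k l. k \<noteq> l \<longrightarrow> MH_zero V E k l)"

end

theory Submission
  imports Defs
begin

text \<open>
  Off the diagonal the magnitude chain complex of a tree is contracted by an explicit chain
  homotopy \<open>h\<close>. If \<open>k \<noteq> l\<close>, a generator \<open>(x\<^sub>0, \<dots>, x\<^sub>k)\<close> has a first position \<open>j\<close> where
  either \<open>x\<^sub>j\<close> is an inner vertex lying on a geodesic from \<open>x\<^sub>j\<^sub>-\<^sub>1\<close> to \<open>x\<^sub>j\<^sub>+\<^sub>1\<close>, or
  \<open>d(x\<^sub>j, x\<^sub>j\<^sub>+\<^sub>1) \<ge> 2\<close>. In the second case \<open>h\<close> inserts, with sign \<open>(-1)\<^sup>j\<^sup>+\<^sup>1\<close>, the neighbour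
  of \<open>x\<^sub>j\<close> on the geodesic towards \<open>x\<^sub>j\<^sub>+\<^sub>1\<close>; in the first case \<open>h\<close> vanishes. The tree property
  enters only through the fact that a vertex has at most one neighbour that is not farther
  from a given vertex. It ensures that the inserted tuple has no smooth inner vertex before
  position \<open>j + 1\<close>, is smooth there, and is smooth after it exactly where the original tuple is;
  and that in the first case the tuple is what \<open>h\<close> produces from its \<open>j\<close>-th face. This gives
  \<open>\<partial>h + h\<partial> = id\<close> on generators, so every cycle \<open>c\<close> is the boundary of \<open>h c\<close>.
\<close>

section \<open>Distances in connected graphs\<close>

locale connected_simple_graph =
  fixes V :: "'a set" and E :: "'a \<Rightarrow> 'a \<Rightarrow> bool"
  assumes simple: "simple_graph V E" and connected: "connected_graph V E"
begin

abbreviation d :: "'a \<Rightarrow> 'a \<Rightarrow> nat" where "d \<equiv> dist V E"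

lemma edge_sym: "E x y \<Longrightarrow> E y x"
  using simple by (simp add: simple_graph_def)

lemma edge_irrefl: "\<not> E x x"
  using simple by (simp add: simple_graph_def)

lemma edge_in_V: "E x y \<Longrightarrow> x \<in> V \<and> y \<in> V"
  using simple by (simp add: simple_graph_def)

lemma walk_edge: "E x y \<Longrightarrow> walk V E [x, y]"
  using edge_in_V by (auto simp: walk_def less_Suc_eq)

lemma dist_le_walk_length: "walk V E p \<Longrightarrow> hd p = x \<Longrightarrow> last p = y \<Longrightarrow> d x y \<le> length p - 1"
  unfolding dist_def by (rule Least_le) (metis Suc_diff_1 length_greater_0_conv walk_def)

lemma shortest_walk_exists:
  assumes "x \<in> V" "y \<in> V"
  obtains p where "walk V E p" "hd p = x" "last p = y" "length p = Suc (d x y)"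
proof -
  obtain p where "walk V E p" "hd p = x" "last p = y"
    using connected assms by (auto simp: connected_graph_def)
  then have "\<exists>n p. walk V E p \<and> hd p = x \<and> last p = y \<and> length p = Suc n"
    by (metis Suc_pred length_greater_0_conv walk_def)
  then have "\<exists>p. walk V E p \<and> hd p = x \<and> last p = y \<and> length p = Suc (d x y)"
    unfolding dist_def by (rule LeastI_ex)
  then show ?thesis using that by blast
qed

lemma dist_self: "x \<in> V \<Longrightarrow> d x x = 0"
  using dist_le_walk_length[of "[x]" x x] by (simp add: walk_def)

lemma dist_eq_0_imp_eq: assumes "x \<in> V" "y \<in> V" "d x y = 0" shows "x = y"
proof -
  obtain p where "hd p = x" "last p = y" "length p = 1"
    using shortest_walk_exists[OF assms(1,2)] assms(3) by auto
  then show ?thesis by (cases p) auto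
qed

lemma walk_rev:
  assumes "walk V E p"
  shows "walk V E (rev p)"
proof -
  have "E (rev p ! i) (rev p ! Suc i)" if "Suc i < length p" for i
  proof -
    have "E (p ! (length p - Suc (Suc i))) (p ! Suc (length p - Suc (Suc i)))"
      using assms that by (simp add: walk_def)
    moreover have "Suc (length p - Suc (Suc i)) = length p - Suc i" using that by simp
    ultimately show ?thesis using that by (simp add: rev_nth edge_sym)
  qed
  then show ?thesis using assms by (simp add: walk_def)
qed

lemma dist_commute: assumes "x \<in> V" "y \<in> V" shows "d x y = d y x"
proof -
  have "d a b \<le> d b a" if ab: "a \<in> V" "b \<in> V" for a b
  proof -
    obtain p where p: "walk V E p" "hd p = b" "last p = a" "length p = Suc (d b a)"
      using shortest_walk_exists[OF ab(2,1)] .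
    then have "p \<noteq> []" by auto
    then show ?thesis using dist_le_walk_length[OF walk_rev[OF p(1)]] p by (simp add: hd_rev last_rev)
  qed
  then show ?thesis using assms by (simp add: order_antisym)
qed

lemma walk_append_tl: assumes "walk V E p" "walk V E q" "last p = hd q"
  shows "walk V E (p @ tl q)"
proof -
  have pne: "p \<noteq> []" and qne: "q \<noteq> []" using assms walk_def by auto
  have "set (p @ tl q) \<subseteq> V" using assms by (auto simp: walk_def dest: list.set_sel(2))
  moreover have "E ((p @ tl q) ! i) ((p @ tl q) ! Suc i)" if "Suc i < length (p @ tl q)" for i
  proof (cases "Suc i < length p")
    case True then show ?thesis using assms(1) by (simp add: walk_def nth_append)
  next
    case False
    show ?thesis
    proof (cases "i < length p")
      case True
      then have "i = length p - 1" using False by simp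
      then have "(p @ tl q) ! i = q ! 0" using pne qne assms(3)
        by (simp add: nth_append last_conv_nth hd_conv_nth)
      moreover have "(p @ tl q) ! Suc i = q ! 1" using \<open>i = length p - 1\<close> pne qne that
        by (simp add: nth_append nth_tl)
      ultimately show ?thesis using assms(2) that qne \<open>i = length p - 1\<close>
        by (auto simp: walk_def)
    next
      case False
      then have "(p @ tl q) ! i = q ! (i - length p + 1)" "(p @ tl q) ! Suc i = q ! (Suc i - length p + 1)"
        using that qne by (auto simp: nth_append nth_tl)
      moreover have "Suc (i - length p + 1) < length q" using that False qne by auto
      moreover have "Suc i - length p + 1 = Suc (i - length p + 1)" using False by simp
      ultimately show ?thesis using assms(2) unfolding walk_def by metis
    qed
  qed
  ultimately show ?thesis using pne by (simp add: walk_def)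
qed

lemma dist_triangle: assumes "x \<in> V" "y \<in> V" "z \<in> V" shows "d x z \<le> d x y + d y z"
proof -
  obtain p where p: "walk V E p" "hd p = x" "last p = y" "length p = Suc (d x y)"
    using shortest_walk_exists assms by blast
  obtain q where q: "walk V E q" "hd q = y" "last q = z" "length q = Suc (d y z)"
    using shortest_walk_exists assms by blast
  have "hd (p @ tl q) = x" using p by (cases p) auto
  moreover have "last (p @ tl q) = z" using q p by (cases q; cases "tl q") auto
  ultimately show ?thesis using dist_le_walk_length[OF walk_append_tl[OF p(1) q(1)]] p q by simp
qed

lemma dist_edge: assumes "E x y" shows "d x y = 1"
proof -
  have "d x y \<le> 1" using dist_le_walk_length[OF walk_edge[OF assms]] by simp
  moreover have "d x y \<noteq> 0" using dist_eq_0_imp_eq edge_in_V assms edge_irrefl by metis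
  ultimately show ?thesis by simp
qed

lemma dist_1_imp_edge: assumes "x \<in> V" "y \<in> V" "d x y = 1" shows "E x y"
proof -
  obtain p where p: "walk V E p" "hd p = x" "last p = y" "length p = Suc (d x y)"
    using shortest_walk_exists[OF assms(1,2)] .
  then show ?thesis using assms(3) by (auto simp: walk_def hd_conv_nth last_conv_nth)
qed

lemma walk_drop:
  assumes "walk V E p" "i < length p"
  shows "walk V E (drop i p)" "hd (drop i p) = p ! i" "last (drop i p) = last p"
  using assms by (auto simp: walk_def hd_drop_conv_nth dest: in_set_dropD)

lemma walk_take: "walk V E p \<Longrightarrow> 0 < n \<Longrightarrow> walk V E (take n p)"
  by (auto simp: walk_def dest: in_set_takeD)

lemma dist_nth_last_le:
  assumes "walk V E p" "i < length p"
  shows "d (p ! i) (last p) \<le> length p - 1 - i"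
  using dist_le_walk_length[OF walk_drop(1)[OF assms]] walk_drop[OF assms] assms by simp

lemma shortest_walk_avoids:
  assumes "walk V E p" "hd p = x'" "last p = y" "length p = Suc (d x' y)"
    and "d x' y \<le> d x y" "x \<noteq> x'"
  shows "x \<notin> set p"
proof
  assume "x \<in> set p"
  then obtain i where i: "i < length p" "p ! i = x" by (auto simp: in_set_conv_nth)
  then have "i \<noteq> 0" using assms(2,6) by (metis hd_conv_nth list.size(3) not_less0)
  then show False using dist_nth_last_le[OF assms(1) i(1)] i assms by simp
qed

lemma geodesic_step_exists:
  assumes "a \<in> V" "b \<in> V" "a \<noteq> b"
  obtains c where "E a c" "Suc (d c b) = d a b"
proof -
  obtain p where p: "walk V E p" "hd p = a" "last p = b" "length p = Suc (d a b)"
    using shortest_walk_exists assms by blast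
  have "d a b \<noteq> 0" using dist_eq_0_imp_eq assms by blast
  then have l: "1 < length p" using p by simp
  have e: "E a (p ! 1)" using p l by (auto simp: walk_def hd_conv_nth)
  have "d (p ! 1) b \<le> d a b - 1" using dist_nth_last_le[OF p(1) l] p by simp
  moreover have "d a b \<le> d a (p ! 1) + d (p ! 1) b"
    using dist_triangle assms edge_in_V[OF e] by blast
  ultimately show ?thesis using that e dist_edge[OF e] \<open>d a b \<noteq> 0\<close> by simp
qed

lemma walk_distinct_exists:
  "walk V E p \<Longrightarrow> \<exists>q. walk V E q \<and> distinct q \<and> hd q = hd p \<and> last q = last p \<and> set q \<subseteq> set p"
proof (induction "length p" arbitrary: p rule: less_induct)
  case less
  show ?case
  proof (cases "distinct p")
    case False
    then obtain xs y ys zs where p: "p = xs @ [y] @ ys @ [y] @ zs" using not_distinct_decomp by blast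
    let ?p' = "(xs @ [y]) @ tl (y # zs)"
    have "walk V E (xs @ [y])"
      using walk_take[OF less.prems, of "Suc (length xs)"] p by simp
    moreover have "walk V E (y # zs)"
      using walk_drop(1)[OF less.prems, of "length xs + 1 + length ys"] p by simp
    ultimately have "walk V E ?p'" by (intro walk_append_tl) auto
    moreover have "length ?p' < length p" using p by simp
    ultimately obtain q where q: "walk V E q" "distinct q" "hd q = hd ?p'" "last q = last ?p'" "set q \<subseteq> set ?p'"
      using less.hyps by blast
    moreover have "hd ?p' = hd p" using p by (cases xs) auto
    moreover have "last ?p' = last p" using p by (cases zs) auto
    moreover have "set ?p' \<subseteq> set p" using p by auto
    ultimately show ?thesis by (intro exI[of _ q]) auto
  qed (use less.prems in blast)
qed

end

section \<open>Trees\<close>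

locale tree_graph = connected_simple_graph +
  assumes acyclic: "\<nexists>c. is_cycle V E c"
begin

lemma no_walk_between_neighbours_avoiding:
  assumes "E a c" "E a c'" "c \<noteq> c'" "walk V E p" "hd p = c" "last p = c'" "a \<notin> set p"
  shows False
proof -
  obtain q where q: "walk V E q" "distinct q" "hd q = c" "last q = c'" "set q \<subseteq> set p"
    using walk_distinct_exists[OF assms(4)] assms by blast
  then obtain q' where q': "q = c # q'" by (cases q) (auto simp: walk_def)
  have "q' \<noteq> []" using q q' assms(3) by auto
  have "walk V E ([a, c] @ tl q)"
    using walk_append_tl[OF walk_edge[OF assms(1)] q(1)] q by simp
  moreover have "length (a # q) \<ge> 3" using q' \<open>q' \<noteq> []\<close> by (cases q') auto
  ultimately have "is_cycle V E (a # q)"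
    using q q' assms by (auto simp: is_cycle_def intro: edge_sym)
  then show False using acyclic by blast
qed

lemma neighbour_not_farther_unique:
  assumes "y \<in> V" "E a c" "E a c'" "d c y \<le> d a y" "d c' y \<le> d a y"
  shows "c = c'"
proof (rule ccontr)
  assume ne: "c \<noteq> c'"
  have V: "c \<in> V" "c' \<in> V" using edge_in_V assms by auto
  obtain p where p: "walk V E p" "hd p = c" "last p = y" "length p = Suc (d c y)"
    using shortest_walk_exists V assms by blast
  obtain q where q: "walk V E q" "hd q = c'" "last q = y" "length q = Suc (d c' y)"
    using shortest_walk_exists V assms by blast
  have "a \<noteq> c" "a \<noteq> c'" using assms(2,3) edge_irrefl by blast+
  then have "a \<notin> set p" "a \<notin> set q"
    using shortest_walk_avoids[OF p] shortest_walk_avoids[OF q] assms(4,5) by blast+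
  moreover have "set (tl (rev q)) \<subseteq> set (rev q)" by (cases "rev q") auto
  ultimately have avoid: "a \<notin> set (p @ tl (rev q))" by auto
  have ne': "p \<noteq> []" "q \<noteq> []" using p q by auto
  have "walk V E (p @ tl (rev q))"
    using walk_append_tl[OF p(1) walk_rev[OF q(1)]] p q ne' by (simp add: hd_rev)
  moreover have "last (p @ tl (rev q)) = c'"
  proof (cases "tl (rev q) = []")
    case True
    then have "q = [c']" using q(2) ne' by (cases "rev q") auto
    then show ?thesis using p q True by simp
  qed (use q ne' in \<open>simp add: last_tl last_rev\<close>)
  ultimately show False
    using no_walk_between_neighbours_avoiding[OF assms(2,3) ne _ _ _ avoid] p ne' by simp
qed

lemma dist_across_edge:
  assumes "E a b" "c \<in> V"
  shows "d a c = Suc (d b c) \<or> d b c = Suc (d a c)"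
proof -
  have V: "a \<in> V" "b \<in> V" using edge_in_V assms by auto
  have "d a c \<noteq> d b c"
  proof
    assume eq: "d a c = d b c"
    have "a \<noteq> c"
    proof
      assume "a = c"
      then have "b = a" using eq dist_self dist_eq_0_imp_eq V by simp
      then show False using assms(1) edge_irrefl by simp
    qed
    then obtain w where w: "E a w" "Suc (d w c) = d a c"
      using geodesic_step_exists V assms by blast
    then have "b = w" using neighbour_not_farther_unique[OF assms(2,1) w(1)] eq by simp
    then show False using w eq by simp
  qed
  moreover have "d a c \<le> d a b + d b c" "d b c \<le> d b a + d a c"
    using dist_triangle V assms by auto
  moreover have "d a b = 1" "d b a = 1" using dist_edge assms edge_sym by auto
  ultimately show ?thesis by linarith
qed

lemma geodesic_prolong:
  assumes "E p a" "b \<in> V" "c \<in> V" "a \<noteq> b" "d p b = Suc (d a b)" "d a c = d a b + d b c"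
  shows "d p c = Suc (d a c)"
proof (rule ccontr)
  assume "d p c \<noteq> Suc (d a c)"
  then have pc: "Suc (d p c) = d a c" using dist_across_edge[OF assms(1,3)] by simp
  have aV: "a \<in> V" using edge_in_V assms by auto
  obtain w where w: "E a w" "Suc (d w b) = d a b" using geodesic_step_exists aV assms by blast
  have "d w c \<le> d w b + d b c" using dist_triangle edge_in_V[OF w(1)] assms by blast
  then have "w = p"
    using neighbour_not_farther_unique[OF assms(3) w(1) edge_sym[OF assms(1)]] pc w assms by simp
  then show False using w(2) assms(5) by simp
qed

end

lemma tree_graph_if_is_tree: "is_tree V E \<Longrightarrow> tree_graph V E"
  by (simp add: is_tree_def tree_graph_def tree_graph_axioms_def connected_simple_graph_def)

section \<open>Tuples and chains\<close>

definition insert_at :: "nat \<Rightarrow> 'a \<Rightarrow> 'a list \<Rightarrow> 'a list" where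
  "insert_at i v xs = take i xs @ v # drop i xs"

lemma length_face: "i < length xs \<Longrightarrow> length (face i xs) = length xs - 1"
  by (simp add: face_def)

lemma nth_face: "i < length xs \<Longrightarrow> m < length xs - 1 \<Longrightarrow>
  face i xs ! m = (if m < i then xs ! m else xs ! Suc m)"
  by (auto simp: face_def nth_append min_def)

lemma length_insert_at: "i \<le> length xs \<Longrightarrow> length (insert_at i v xs) = Suc (length xs)"
  by (simp add: insert_at_def)

lemma nth_insert_at: "i \<le> length xs \<Longrightarrow> m \<le> length xs \<Longrightarrow>
  insert_at i v xs ! m = (if m < i then xs ! m else if m = i then v else xs ! (m - 1))"
  by (auto simp: insert_at_def nth_append nth_Cons' min_def)

lemma face_insert_at: "i \<le> length xs \<Longrightarrow> face i (insert_at i v xs) = xs"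
  by (simp add: face_def insert_at_def min_def)

lemma insert_at_face: "i < length xs \<Longrightarrow> insert_at i (xs ! i) (face i xs) = xs"
  by (simp add: face_def insert_at_def min_def Cons_nth_drop_Suc)

lemma face_Suc_insert_at:
  assumes "p \<le> i" "i < length xs"
  shows "face (Suc i) (insert_at p v xs) = insert_at p v (face i xs)"
proof (rule nth_equalityI)
  show "length (face (Suc i) (insert_at p v xs)) = length (insert_at p v (face i xs))"
    using assms by (simp add: length_face length_insert_at)
next
  fix m assume "m < length (face (Suc i) (insert_at p v xs))"
  then have "m < length xs" using assms by (simp add: length_face length_insert_at)
  then show "face (Suc i) (insert_at p v xs) ! m = insert_at p v (face i xs) ! m"
    using assms by (auto simp: nth_face nth_insert_at length_insert_at length_face)
qed

lemma tlen_Cons_Cons: "tlen V E (a # b # r) = dist V E a b + tlen V E (b # r)"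
proof -
  have "tlen V E (a # b # r) = (\<Sum>i<Suc (length r). dist V E ((a # b # r) ! i) ((a # b # r) ! Suc i))"
    by (simp add: tlen_def)
  also have "\<dots> = dist V E a b + (\<Sum>i<length r. dist V E ((b # r) ! i) ((b # r) ! Suc i))"
    by (subst sum.lessThan_Suc_shift) simp
  finally show ?thesis by (simp add: tlen_def)
qed

lemma tlen_face_Suc:
  "Suc (Suc j) < length xs \<Longrightarrow>
   tlen V E (face (Suc j) xs) + dist V E (xs ! j) (xs ! Suc j) + dist V E (xs ! Suc j) (xs ! Suc (Suc j))
   = tlen V E xs + dist V E (xs ! j) (xs ! Suc (Suc j))"
proof (induction j arbitrary: xs)
  case 0
  then show ?case
    by (cases xs; cases "tl xs"; cases "tl (tl xs)") (auto simp: face_def tlen_Cons_Cons)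
next
  case (Suc j)
  then obtain a b r where xs: "xs = a # b # r" by (cases xs; cases "tl xs") auto
  have "face (Suc (Suc j)) xs = a # b # face j r" by (simp add: xs face_def)
  moreover have "face (Suc j) (b # r) = b # face j r" by (simp add: face_def)
  ultimately show ?case using Suc.IH[of "b # r"] Suc.prems xs by (simp add: tlen_Cons_Cons)
qed

definition supp :: "('b \<Rightarrow> int) \<Rightarrow> 'b set" where
  "supp c = {x. c x \<noteq> 0}"

definition basis :: "'b \<Rightarrow> 'b \<Rightarrow> int" where
  "basis x = (\<lambda>y. if y = x then 1 else 0)"

definition linext :: "('b \<Rightarrow> 'c \<Rightarrow> int) \<Rightarrow> ('b \<Rightarrow> int) \<Rightarrow> 'c \<Rightarrow> int" where
  "linext f c = (\<lambda>z. \<Sum>x\<in>supp c. c x * f x z)"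

lemma linext_superset:
  assumes "finite T" "supp c \<subseteq> T"
  shows "linext f c z = (\<Sum>x\<in>T. c x * f x z)"
  unfolding linext_def by (rule sum.mono_neutral_left) (use assms in \<open>auto simp: supp_def\<close>)

lemma linext_sum:
  assumes "finite S" "\<And>i. i \<in> S \<Longrightarrow> finite (supp (F i))"
  shows "linext f (\<lambda>y. \<Sum>i\<in>S. a i * F i y) z = (\<Sum>i\<in>S. a i * linext f (F i) z)"
proof -
  let ?T = "\<Union>i\<in>S. supp (F i)"
  have fin: "finite ?T" using assms by auto
  have "supp (\<lambda>y. \<Sum>i\<in>S. a i * F i y) \<subseteq> ?T"
  proof
    fix y assume "y \<in> supp (\<lambda>y. \<Sum>i\<in>S. a i * F i y)"
    then obtain i where "i \<in> S" "a i * F i y \<noteq> 0"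
      by (auto simp: supp_def elim: sum.not_neutral_contains_not_neutral)
    then show "y \<in> ?T" by (auto simp: supp_def)
  qed
  then have "linext f (\<lambda>y. \<Sum>i\<in>S. a i * F i y) z = (\<Sum>x\<in>?T. (\<Sum>i\<in>S. a i * F i x) * f x z)"
    by (rule linext_superset[OF fin])
  also have "\<dots> = (\<Sum>i\<in>S. \<Sum>x\<in>?T. a i * (F i x * f x z))"
    by (simp add: sum_distrib_right mult.assoc sum.swap[of _ ?T])
  also have "\<dots> = (\<Sum>i\<in>S. a i * linext f (F i) z)"
  proof (rule sum.cong[OF refl])
    fix i assume "i \<in> S"
    then have "linext f (F i) z = (\<Sum>x\<in>?T. F i x * f x z)" by (intro linext_superset[OF fin]) blast
    then show "(\<Sum>x\<in>?T. a i * (F i x * f x z)) = a i * linext f (F i) z" by (simp add: sum_distrib_left)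
  qed
  finally show ?thesis .
qed

lemma supp_basis: "supp (basis x) = {x}"
  by (auto simp: supp_def basis_def)

lemma linext_basis: "linext f (basis x) z = f x z"
  unfolding linext_def supp_basis by (simp add: basis_def)

lemma linext_smult_basis: "linext f (\<lambda>y. s * basis x y) z = s * f x z"
proof (cases "s = 0")
  case False
  then have "supp (\<lambda>y. s * basis x y) = {x}" by (auto simp: supp_def basis_def)
  then show ?thesis by (simp add: linext_def basis_def)
qed (simp add: linext_def supp_def)

lemma linext_zero: "linext f (\<lambda>_. 0) z = 0"
  by (simp add: linext_def supp_def)

lemma linext_linext:
  assumes "finite (supp c)" "\<And>x. x \<in> supp c \<Longrightarrow> finite (supp (f x))"
  shows "linext g (linext f c) z = linext (\<lambda>x. linext g (f x)) c z"
  using linext_sum[OF assms, where f = g and a = c and z = z] by (simp add: linext_def)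

lemma linext_basis_id: assumes "finite (supp c)" shows "linext basis c z = c z"
proof -
  have "linext basis c z = (\<Sum>x\<in>supp c. if z = x then c x else 0)"
    unfolding linext_def basis_def by (intro sum.cong) auto
  also have "\<dots> = c z" using assms by (simp add: supp_def)
  finally show ?thesis .
qed

definition bd_basis :: "'a set \<Rightarrow> ('a \<Rightarrow> 'a \<Rightarrow> bool) \<Rightarrow> nat \<Rightarrow> 'a list \<Rightarrow> 'a list \<Rightarrow> int" where
  "bd_basis V E k xs = (\<lambda>z. \<Sum>i\<in>{1..<k}.
     (if tlen V E (face i xs) = tlen V E xs then (-1)^i else 0) * basis (face i xs) z)"

lemma bd_eq_linext: "bd V E k l c = linext (bd_basis V E k) c"
proof -
  have "bd_basis V E k xs ys =
    (\<Sum>i\<in>{1..<k}. if tlen V E (face i xs) = tlen V E xs \<and> face i xs = ys then (-1)^i else 0)" for xs ys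
    unfolding bd_basis_def basis_def by (intro sum.cong) auto
  then show ?thesis by (simp add: bd_def linext_def supp_def)
qed

lemma finite_supp_bd_basis: "finite (supp (bd_basis V E k xs))"
proof (rule finite_subset)
  show "supp (bd_basis V E k xs) \<subseteq> (\<lambda>i. face i xs) ` {1..<k}"
  proof
    fix z assume "z \<in> supp (bd_basis V E k xs)"
    then obtain i where "i \<in> {1..<k}"
      "(if tlen V E (face i xs) = tlen V E xs then (-1::int)^i else 0) * basis (face i xs) z \<noteq> 0"
      by (auto simp: supp_def bd_basis_def elim: sum.not_neutral_contains_not_neutral)
    then show "z \<in> (\<lambda>i. face i xs) ` {1..<k}" by (auto simp: basis_def split: if_splits)
  qed
qed simp

section \<open>Reducible positions\<close>

context connected_simple_graph
begin

definition proper :: "'a list \<Rightarrow> bool" where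
  "proper xs \<longleftrightarrow> set xs \<subseteq> V \<and> (\<forall>i. Suc i < length xs \<longrightarrow> xs ! i \<noteq> xs ! Suc i)"

lemma Igen_iff: "xs \<in> Igen V E k l \<longleftrightarrow> proper xs \<and> length xs = Suc k \<and> tlen V E xs = l"
  unfolding Igen_def proper_def by auto

lemma proper_nth_in_V: "proper xs \<Longrightarrow> i < length xs \<Longrightarrow> xs ! i \<in> V"
  unfolding proper_def by auto

lemma proper_dist_pos:
  assumes "proper xs" "Suc i < length xs"
  shows "1 \<le> d (xs ! i) (xs ! Suc i)"
proof -
  have "xs ! i \<noteq> xs ! Suc i" using assms unfolding proper_def by auto
  then show ?thesis using dist_eq_0_imp_eq proper_nth_in_V assms by (metis Suc_lessD less_one not_le)
qed

text \<open>\<open>x\<^sub>i\<close> lies on a geodesic from \<open>x\<^sub>i\<^sub>-\<^sub>1\<close> to \<open>x\<^sub>i\<^sub>+\<^sub>1\<close>; exactly then the face \<open>\<partial>\<^sub>i\<close> survives.\<close>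
definition smooth :: "'a list \<Rightarrow> nat \<Rightarrow> bool" where
  "smooth xs i \<longleftrightarrow> d (xs ! (i - 1)) (xs ! Suc i) = d (xs ! (i - 1)) (xs ! i) + d (xs ! i) (xs ! Suc i)"

lemma tlen_face_eq_iff_smooth:
  assumes "set xs \<subseteq> V" "1 \<le> i" "Suc i < length xs"
  shows "tlen V E (face i xs) = tlen V E xs \<longleftrightarrow> smooth xs i"
proof -
  obtain j where j: "i = Suc j" using assms by (cases i) auto
  have "xs ! j \<in> V" "xs ! Suc j \<in> V" "xs ! Suc (Suc j) \<in> V" using assms j by auto
  then have "d (xs ! j) (xs ! Suc (Suc j)) \<le> d (xs ! j) (xs ! Suc j) + d (xs ! Suc j) (xs ! Suc (Suc j))"
    using dist_triangle by blast
  then show ?thesis using tlen_face_Suc[of j xs V E] assms j by (simp add: smooth_def) arith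
qed

lemma bd_basis_smooth:
  assumes "proper xs" "length xs = Suc k"
  shows "bd_basis V E k xs = (\<lambda>z. \<Sum>i\<in>{1..<k}. (if smooth xs i then (-1)^i else 0) * basis (face i xs) z)"
  unfolding bd_basis_def
  using tlen_face_eq_iff_smooth assms by (intro ext sum.cong) (auto simp: proper_def)

definition reducible :: "'a list \<Rightarrow> nat \<Rightarrow> bool" where
  "reducible xs m \<longleftrightarrow> Suc m < length xs \<and> ((1 \<le> m \<and> smooth xs m) \<or> 2 \<le> d (xs ! m) (xs ! Suc m))"

definition first_reducible :: "'a list \<Rightarrow> nat" where
  "first_reducible xs = (LEAST m. reducible xs m)"

lemma Igen_off_diagonal_reducible:
  assumes "xs \<in> Igen V E k l" "k \<noteq> l"
  shows "\<exists>m. reducible xs m"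
proof (rule ccontr)
  assume "\<not> (\<exists>m. reducible xs m)"
  then have "d (xs ! i) (xs ! Suc i) = 1" if "i < k" for i
    using that assms(1) proper_dist_pos[of xs i] by (force simp: Igen_iff reducible_def)
  then have "(\<Sum>i<k. d (xs ! i) (xs ! Suc i)) = k" by simp
  then show False using assms by (auto simp: Igen_iff tlen_def)
qed

lemma first_reducible:
  assumes "\<exists>m. reducible xs m"
  shows "reducible xs (first_reducible xs)" "m < first_reducible xs \<Longrightarrow> \<not> reducible xs m"
  using LeastI_ex[OF assms] not_less_Least unfolding first_reducible_def by auto

lemma first_reducible_eqI:
  "reducible xs j \<Longrightarrow> (\<And>m. m < j \<Longrightarrow> \<not> reducible xs m) \<Longrightarrow> first_reducible xs = j"
  unfolding first_reducible_def by (metis Least_equality not_less)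

lemma first_reducible_less_length: "\<exists>m. reducible xs m \<Longrightarrow> Suc (first_reducible xs) < length xs"
  using first_reducible(1) reducible_def by blast

lemma reducible_prefix_cong:
  assumes "\<And>i. i \<le> j \<Longrightarrow> xs ! i = ys ! i" "j < length xs" "j < length ys" "m < j"
  shows "reducible xs m = reducible ys m"
proof -
  have "m - 1 \<le> j" "m \<le> j" "Suc m \<le> j" using assms by auto
  then show ?thesis unfolding reducible_def smooth_def using assms by (simp add: assms(1))
qed

lemma first_reducible_face:
  assumes "\<exists>m. reducible xs m" "j \<le> first_reducible xs" "j < i" "i < length xs"
    and "reducible (face i xs) j"
  shows "first_reducible (face i xs) = j"
proof (rule first_reducible_eqI[OF assms(5)])
  fix m assume m: "m < j"
  have "reducible xs m = reducible (face i xs) m"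
    by (rule reducible_prefix_cong[of j]) (use assms m in \<open>auto simp: nth_face length_face\<close>)
  then show "\<not> reducible (face i xs) m" using first_reducible(2)[OF assms(1)] m assms(2) by simp
qed

context
  fixes xs :: "'a list" and m :: nat
  assumes xs: "proper xs" "\<exists>m. reducible xs m" and m: "m < first_reducible xs"
begin

lemma dist_before_first_reducible: "d (xs ! m) (xs ! Suc m) = 1"
proof -
  have "Suc m < length xs" using first_reducible_less_length[OF xs(2)] m by simp
  then show ?thesis
    using first_reducible(2)[OF xs(2) m] proper_dist_pos[OF xs(1)] by (force simp: reducible_def)
qed

lemma edge_before_first_reducible: "E (xs ! m) (xs ! Suc m)"
  using first_reducible_less_length[OF xs(2)] m dist_before_first_reducible
  by (intro dist_1_imp_edge proper_nth_in_V[OF xs(1)]) auto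

end

lemma not_smooth_before_first_reducible:
  assumes "\<exists>m. reducible xs m" "m < first_reducible xs" "1 \<le> m"
  shows "\<not> smooth xs m"
  using first_reducible_less_length[OF assms(1)] first_reducible(2)[OF assms(1,2)] assms(2,3)
  by (auto simp: reducible_def)

end

section \<open>The chain homotopy\<close>

context tree_graph
begin

definition towards :: "'a \<Rightarrow> 'a \<Rightarrow> 'a" where
  "towards a b = (SOME c. E a c \<and> Suc (d c b) = d a b)"

lemma towards:
  assumes "a \<in> V" "b \<in> V" "a \<noteq> b"
  shows "E a (towards a b)" "Suc (d (towards a b) b) = d a b"
proof -
  obtain c where "E a c" "Suc (d c b) = d a b" using geodesic_step_exists[OF assms] .
  then have "E a (towards a b) \<and> Suc (d (towards a b) b) = d a b"
    unfolding towards_def by (rule someI[of _ c, OF conjI])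
  then show "E a (towards a b)" "Suc (d (towards a b) b) = d a b" by auto
qed

lemma towards_eqI:
  assumes "b \<in> V" "E a c" "Suc (d c b) = d a b"
  shows "towards a b = c"
proof -
  have a: "a \<in> V" using edge_in_V assms(2) by blast
  have ab: "a \<noteq> b"
  proof
    assume "a = b"
    then show False using assms(1,3) dist_self by simp
  qed
  note t = towards[OF a assms(1) ab]
  have "d (towards a b) b \<le> d a b" "d c b \<le> d a b" using t(2) assms(3) by linarith+
  then show ?thesis using neighbour_not_farther_unique[OF assms(1) t(1) assms(2)] by blast
qed

text \<open>The chain homotopy \<open>htpy\<close> is nonzero on a generator exactly when its first reducible
  position \<open>j\<close> is a step of length \<open>\<ge> 2\<close> (and not a smooth vertex); it then inserts the first
  vertex of the geodesic from \<open>x\<^sub>j\<close> to \<open>x\<^sub>j\<^sub>+\<^sub>1\<close>.\<close>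
definition inserting :: "'a list \<Rightarrow> bool" where
  "inserting xs \<longleftrightarrow> (\<exists>m. reducible xs m) \<and> \<not> (1 \<le> first_reducible xs \<and> smooth xs (first_reducible xs))"

definition htpy :: "'a list \<Rightarrow> 'a list \<Rightarrow> int" where
  "htpy xs = (if inserting xs
     then (\<lambda>z. (-1) ^ Suc (first_reducible xs) * basis (insert_at (Suc (first_reducible xs))
                 (towards (xs ! first_reducible xs) (xs ! Suc (first_reducible xs))) xs) z)
     else (\<lambda>_. 0))"

text \<open>Together with \<open>insert_at_face\<close>: \<open>xs\<close> is what \<open>htpy\<close> produces from this face.\<close>
lemma face_at_smooth_first_reducible:
  assumes g: "proper xs" and ex: "\<exists>m. reducible xs m" and j: "first_reducible xs = Suc j1"
    and s: "smooth xs (Suc j1)"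
  shows "inserting (face (Suc j1) xs) \<and> first_reducible (face (Suc j1) xs) = j1 \<and>
         towards (face (Suc j1) xs ! j1) (face (Suc j1) xs ! Suc j1) = xs ! Suc j1"
proof -
  let ?y = "face (Suc j1) xs"
  have len: "Suc (Suc j1) < length xs" using first_reducible_less_length[OF ex] j by simp
  have ly: "length ?y = length xs - 1" using len by (simp add: length_face)
  have y1: "?y ! m = xs ! m" if "m < Suc j1" for m using that len by (simp add: nth_face)
  have y2: "?y ! m = xs ! Suc m" if "Suc j1 \<le> m" "m < length xs - 1" for m using that len by (simp add: nth_face)
  have yj1: "?y ! j1 = xs ! j1" using y1 by simp
  have yj: "?y ! Suc j1 = xs ! Suc (Suc j1)" using y2 len by simp
  have u1: "d (xs ! j1) (xs ! Suc j1) = 1" using dist_before_first_reducible[OF g ex] j by simp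
  have p2: "1 \<le> d (xs ! Suc j1) (xs ! Suc (Suc j1))" using proper_dist_pos[OF g len] .
  have smv: "d (xs ! j1) (xs ! Suc (Suc j1)) = d (xs ! j1) (xs ! Suc j1) + d (xs ! Suc j1) (xs ! Suc (Suc j1))"
    using s by (simp add: smooth_def)
  have Py: "reducible ?y j1" unfolding reducible_def using ly len yj1 yj smv u1 p2 by simp
  have Jy: "first_reducible ?y = j1" using first_reducible_face[OF ex _ _ _ Py] j len by simp
  have V: "xs ! j1 \<in> V" "xs ! Suc j1 \<in> V" "xs ! Suc (Suc j1) \<in> V" using proper_nth_in_V[OF g] len by auto
  have ns: "\<not> smooth ?y j1" if j1pos: "1 \<le> j1"
  proof
    assume sy: "smooth ?y j1"
    obtain j2 where j2: "j1 = Suc j2" using j1pos by (cases j1) auto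
    have u2: "d (xs ! j2) (xs ! j1) = 1" using dist_before_first_reducible[OF g ex, of j2] j j2 by simp
    have V2: "xs ! j2 \<in> V" using proper_nth_in_V[OF g] len j2 by simp
    have nsm: "\<not> smooth xs j1" using not_smooth_before_first_reducible[OF ex, of j1] j j1pos by simp
    have e: "E (xs ! j1) (xs ! Suc j1)" using edge_before_first_reducible[OF g ex, of j1] j by simp
    have "d (xs ! j2) (xs ! Suc j1) \<noteq> 2" using nsm u1 u2 j2 by (simp add: smooth_def)
    moreover have "d (xs ! j1) (xs ! j2) = 1" using u2 dist_commute V V2 by simp
    moreover have "d (xs ! Suc j1) (xs ! j2) = d (xs ! j2) (xs ! Suc j1)" using dist_commute V V2 by simp
    ultimately have "d (xs ! Suc j1) (xs ! j2) = 0" using dist_across_edge[OF e V2] by auto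
    then have eq: "xs ! Suc j1 = xs ! j2" using dist_eq_0_imp_eq V V2 by blast
    have y2': "?y ! j2 = xs ! j2" using y1 j2 by simp
    have "d (xs ! j2) (xs ! Suc (Suc j1)) = d (xs ! j2) (xs ! j1) + d (xs ! j1) (xs ! Suc (Suc j1))"
      using sy j2 y2' yj1 yj by (simp add: smooth_def)
    then show False using eq u2 smv u1 by simp
  qed
  have cB: "inserting ?y" unfolding inserting_def using Py ns Jy by auto
  have "towards (xs ! j1) (xs ! Suc (Suc j1)) = xs ! Suc j1"
    by (rule towards_eqI) (use V smv u1 edge_before_first_reducible[OF g ex, of j1] j in auto)
  then show ?thesis using cB Jy yj1 yj by simp
qed

lemma face_after_smooth_first_reducible:
  assumes g: "proper xs" and ex: "\<exists>m. reducible xs m" and j: "first_reducible xs = j" and j1: "1 \<le> j"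
    and s: "smooth xs j" and i: "Suc j \<le> i" "Suc i < length xs" and si: "smooth xs i"
  shows "\<exists>m. reducible (face i xs) m" "first_reducible (face i xs) = j" "smooth (face i xs) j"
proof -
  let ?y = "face i xs"
  have len: "Suc j < length xs" using first_reducible_less_length[OF ex] j by simp
  have ly: "length ?y = length xs - 1" using i by (simp add: length_face)
  have y1: "?y ! m = xs ! m" if "m < i" for m using that i by (simp add: nth_face)
  have y2: "?y ! m = xs ! Suc m" if "i \<le> m" "m < length xs - 1" for m using that i by (simp add: nth_face)
  have sy: "smooth ?y j"
  proof (cases "i = Suc j")
    case False
    then show ?thesis using s y1 i j1 unfolding smooth_def by simp
  next
    case True
    obtain j0 where j0: "j = Suc j0" using j1 by (cases j) auto
    have V: "xs ! j0 \<in> V" "xs ! j \<in> V" "xs ! Suc j \<in> V" "xs ! Suc (Suc j) \<in> V"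
      using proper_nth_in_V[OF g] i True j0 by auto
    have u: "d (xs ! j0) (xs ! j) = 1" using dist_before_first_reducible[OF g ex, of j0] j j0 by simp
    have e: "E (xs ! j0) (xs ! j)" using edge_before_first_reducible[OF g ex, of j0] j j0 by simp
    have ne: "xs ! j \<noteq> xs ! Suc j" using g len unfolding proper_def by auto
    have h1: "d (xs ! j0) (xs ! Suc j) = Suc (d (xs ! j) (xs ! Suc j))" using s u j0 by (simp add: smooth_def)
    have h2: "d (xs ! j) (xs ! Suc (Suc j)) = d (xs ! j) (xs ! Suc j) + d (xs ! Suc j) (xs ! Suc (Suc j))"
      using si True by (simp add: smooth_def)
    have "d (xs ! j0) (xs ! Suc (Suc j)) = Suc (d (xs ! j) (xs ! Suc (Suc j)))"
      using geodesic_prolong[OF e V(3) V(4) ne h1 h2] .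
    moreover have "?y ! j0 = xs ! j0" "?y ! j = xs ! j" "?y ! Suc j = xs ! Suc (Suc j)"
      using y1 y2 True i j0 by auto
    ultimately show ?thesis using u j0 by (simp add: smooth_def)
  qed
  have Py: "reducible ?y j" unfolding reducible_def using sy j1 ly i by simp
  show "\<exists>m. reducible ?y m" using Py by blast
  show "first_reducible ?y = j" using first_reducible_face[OF ex _ _ _ Py] j i by simp
  show "smooth ?y j" using sy .
qed

lemma finite_supp_htpy: "finite (supp (htpy xs))"
  by (rule finite_subset[of _ "{insert_at (Suc (first_reducible xs))
        (towards (xs ! first_reducible xs) (xs ! Suc (first_reducible xs))) xs}"])
     (auto simp: htpy_def supp_def basis_def split: if_splits)

lemma linext_htpy_bd_basis:
  assumes "proper xs" "length xs = Suc k"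
  shows "linext htpy (bd_basis V E k xs) z =
    (\<Sum>i\<in>{1..<k}. (if smooth xs i then (-1)^i else 0) * htpy (face i xs) z)"
  unfolding bd_basis_smooth[OF assms] by (subst linext_sum) (auto simp: supp_basis linext_basis)

lemma htpy_identity_not_inserting:
  assumes xs: "proper xs" "length xs = Suc k" and red: "\<exists>m. reducible xs m" and "\<not> inserting xs"
  shows "linext (bd_basis V E (Suc k)) (htpy xs) z + linext htpy (bd_basis V E k xs) z = basis xs z"
proof -
  define j where "j = first_reducible xs"
  have j: "1 \<le> j" "smooth xs j" using assms(4) red unfolding inserting_def j_def by auto
  obtain j1 where j1: "j = Suc j1" using j by (cases j) auto
  have jl: "Suc j < length xs" using first_reducible_less_length[OF red] j_def by simp
  let ?t = "\<lambda>i. (if smooth xs i then (-1)^i else 0) * htpy (face i xs) z"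
  have "?t i = 0" if i: "i \<in> {1..<k} - {j}" for i
  proof (cases "i < j")
    case True
    then show ?thesis using not_smooth_before_first_reducible[OF red, of i] i j_def by simp
  next
    case False
    then have "Suc j \<le> i" using i by auto
    then have "\<not> inserting (face i xs)" if "smooth xs i"
      using face_after_smooth_first_reducible[OF xs(1) red j_def[symmetric] j _ _ that] i xs(2) j(1)
      unfolding inserting_def by auto
    then show ?thesis by (auto simp: htpy_def)
  qed
  then have rest: "sum ?t ({1..<k} - {j}) = 0" by (rule sum.neutral[OF ballI])
  have "htpy (face j xs) z = (-1)^j * basis xs z"
    using face_at_smooth_first_reducible[OF xs(1) red, of j1] insert_at_face[of "Suc j1" xs] jl j j1 j_def
    by (simp add: htpy_def)
  then have "?t j = basis xs z" using j by (simp add: mult.assoc[symmetric] flip: power_add)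
  moreover have "j \<in> {1..<k}" using j jl xs(2) by simp
  ultimately have "linext htpy (bd_basis V E k xs) z = basis xs z"
    using linext_htpy_bd_basis[OF xs] rest by (simp add: sum.remove)
  moreover have "htpy xs = (\<lambda>_. 0)" using assms(4) by (simp add: htpy_def)
  ultimately show ?thesis by (simp add: linext_zero)
qed

context
  fixes xs :: "'a list" and j :: nat and v :: 'a
  assumes xs: "proper xs" and ins: "inserting xs" and j: "first_reducible xs = j"
    and v: "v = towards (xs ! j) (xs ! Suc j)"
begin

lemma inserting_reducible: "\<exists>m. reducible xs m"
  using ins inserting_def by auto

lemma inserting_not_smooth_upto: "1 \<le> i \<Longrightarrow> i \<le> j \<Longrightarrow> \<not> smooth xs i"
  using ins j not_smooth_before_first_reducible[OF inserting_reducible, of i]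
  by (cases "i = j") (auto simp: inserting_def)

lemma inserting_length: "Suc j < length xs"
  using first_reducible_less_length[OF inserting_reducible] j by simp

lemma inserting_long_step: "2 \<le> d (xs ! j) (xs ! Suc j)"
  using first_reducible(1)[OF inserting_reducible] j inserting_not_smooth_upto[of j]
  by (auto simp: reducible_def)

lemma inserting_towards: "E (xs ! j) v" "Suc (d v (xs ! Suc j)) = d (xs ! j) (xs ! Suc j)"
proof -
  have V: "xs ! j \<in> V" "xs ! Suc j \<in> V" using proper_nth_in_V[OF xs] inserting_length by auto
  then have "xs ! j \<noteq> xs ! Suc j" using inserting_long_step dist_self by auto
  then show "E (xs ! j) v" "Suc (d v (xs ! Suc j)) = d (xs ! j) (xs ! Suc j)"
    using towards[OF V] v by auto
qed

lemma inserting_towards_in_V: "v \<in> V"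
  using edge_in_V inserting_towards(1) by blast

lemma inserting_towards_neq: "v \<noteq> xs ! Suc j"
  using inserting_towards(2) inserting_long_step dist_self inserting_towards_in_V by auto

lemma inserting_prev_eq_towards:
  assumes j0: "j = Suc j0"
  shows "xs ! j0 = v"
proof -
  have V: "xs ! j0 \<in> V" "xs ! Suc j0 \<in> V" "xs ! Suc (Suc j0) \<in> V"
    using proper_nth_in_V[OF xs] inserting_length j0 by auto
  have e: "E (xs ! Suc j0) (xs ! j0)"
    using edge_before_first_reducible[OF xs inserting_reducible, of j0] j j0 edge_sym by simp
  have "d (xs ! j0) (xs ! Suc j0) = 1"
    using dist_before_first_reducible[OF xs inserting_reducible, of j0] j j0 by simp
  then have "d (xs ! j0) (xs ! Suc (Suc j0)) \<noteq> Suc (d (xs ! Suc j0) (xs ! Suc (Suc j0)))"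
    using inserting_not_smooth_upto[of j] j0 by (simp add: smooth_def)
  then have "d (xs ! Suc j0) (xs ! Suc (Suc j0)) = Suc (d (xs ! j0) (xs ! Suc (Suc j0)))"
    using dist_across_edge[OF e V(3)] by auto
  then show ?thesis using towards_eqI[OF V(3) e] v j0 by simp
qed

lemma inserting_face_after:
  assumes i: "Suc j \<le> i" "Suc i < length xs" and si: "smooth xs i"
  shows "inserting (face i xs)" "first_reducible (face i xs) = j"
    "towards (face i xs ! j) (face i xs ! Suc j) = v"
proof -
  let ?y = "face i xs"
  have ly: "length ?y = length xs - 1" using i by (simp add: length_face)
  have y1: "?y ! m = xs ! m" if "m < i" for m using that i by (simp add: nth_face)
  have y2: "?y ! m = xs ! Suc m" if "i \<le> m" "m < length xs - 1" for m using that i by (simp add: nth_face)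
  have main: "2 \<le> d (?y ! j) (?y ! Suc j) \<and> \<not> (1 \<le> j \<and> smooth ?y j) \<and> towards (?y ! j) (?y ! Suc j) = v"
  proof (cases "i = Suc j")
    case False
    then show ?thesis using inserting_long_step inserting_not_smooth_upto[of j] y1 i v
      unfolding smooth_def by simp
  next
    case True
    have V: "xs ! j \<in> V" "xs ! Suc j \<in> V" "xs ! Suc (Suc j) \<in> V"
      using proper_nth_in_V[OF xs] i True by auto
    have yy: "?y ! j = xs ! j" "?y ! Suc j = xs ! Suc (Suc j)" using y1 y2 True i by auto
    have h2: "d (xs ! j) (xs ! Suc (Suc j)) = d (xs ! j) (xs ! Suc j) + d (xs ! Suc j) (xs ! Suc (Suc j))"
      using si True by (simp add: smooth_def)
    have "d v (xs ! Suc (Suc j)) \<le> d v (xs ! Suc j) + d (xs ! Suc j) (xs ! Suc (Suc j))"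
      "d (xs ! j) (xs ! Suc (Suc j)) \<le> d (xs ! j) v + d v (xs ! Suc (Suc j))"
      using dist_triangle inserting_towards_in_V V by blast+
    then have dd: "Suc (d v (xs ! Suc (Suc j))) = d (xs ! j) (xs ! Suc (Suc j))"
      using dist_edge[OF inserting_towards(1)] h2 inserting_towards(2) by linarith
    have "\<not> smooth ?y j" if "j = Suc j0" for j0
    proof
      assume "smooth ?y j"
      moreover have "?y ! j0 = v" using y1 True that inserting_prev_eq_towards by simp
      ultimately have "d v (xs ! Suc (Suc j)) = d v (xs ! j) + d (xs ! j) (xs ! Suc (Suc j))"
        using yy that by (simp add: smooth_def)
      then show False using dd by simp
    qed
    then show ?thesis
      using yy h2 inserting_long_step towards_eqI[OF V(3) inserting_towards(1) dd]
      by (cases j) auto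
  qed
  have Py: "reducible ?y j" unfolding reducible_def using main ly i by simp
  show Jy: "first_reducible ?y = j" using first_reducible_face[OF inserting_reducible _ _ _ Py] j i by simp
  show "inserting ?y" unfolding inserting_def using Py Jy main by auto
  show "towards (?y ! j) (?y ! Suc j) = v" using main by simp
qed

lemma length_insert_towards: "length (insert_at (Suc j) v xs) = Suc (length xs)"
  using inserting_length by (simp add: length_insert_at)

lemma nth_insert_towards:
  "m \<le> j \<Longrightarrow> insert_at (Suc j) v xs ! m = xs ! m"
  "insert_at (Suc j) v xs ! Suc j = v"
  "Suc (Suc j) \<le> m \<Longrightarrow> m \<le> length xs \<Longrightarrow> insert_at (Suc j) v xs ! m = xs ! (m - 1)"
  using inserting_length by (simp_all add: nth_insert_at)

lemma not_smooth_insert_towards_upto: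
  assumes "1 \<le> i" "i \<le> j"
  shows "\<not> smooth (insert_at (Suc j) v xs) i"
proof (cases "i = j")
  case False
  then have "smooth (insert_at (Suc j) v xs) i = smooth xs i"
    using nth_insert_towards(1) assms unfolding smooth_def by simp
  then show ?thesis using inserting_not_smooth_upto assms by simp
next
  case True
  then obtain j0 where j0: "j = Suc j0" using assms by (cases j) auto
  have "xs ! j \<in> V" using proper_nth_in_V[OF xs] inserting_length by simp
  moreover have "insert_at (Suc j) v xs ! j0 = v" "xs ! j0 = v"
    using nth_insert_towards(1) inserting_prev_eq_towards j0 by auto
  ultimately show ?thesis
    using True nth_insert_towards(1,2) j0 dist_edge[OF inserting_towards(1)] dist_self
      inserting_towards_in_V dist_commute
    by (simp add: smooth_def)
qed

lemma smooth_insert_towards: "smooth (insert_at (Suc j) v xs) (Suc j)"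
  using nth_insert_towards(1,2) nth_insert_towards(3)[of "Suc (Suc j)"] inserting_length
    dist_edge[OF inserting_towards(1)] inserting_towards(2)
  by (simp add: smooth_def)

lemma smooth_insert_towards_after:
  assumes i: "Suc (Suc j) \<le> i" "Suc i < length (insert_at (Suc j) v xs)"
  shows "smooth (insert_at (Suc j) v xs) i = smooth xs (i - 1)"
proof (cases "i = Suc (Suc j)")
  case False
  then show ?thesis using nth_insert_towards(3) i length_insert_towards unfolding smooth_def by simp
next
  case True
  let ?x0 = "xs ! j" and ?x1 = "xs ! Suc j" and ?x2 = "xs ! Suc (Suc j)"
  have V: "?x0 \<in> V" "?x1 \<in> V" "?x2 \<in> V"
    using proper_nth_in_V[OF xs] i True length_insert_towards by auto
  note t = inserting_towards and tV = inserting_towards_in_V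
  have "d v ?x2 = d v ?x1 + d ?x1 ?x2 \<longleftrightarrow> d ?x0 ?x2 = d ?x0 ?x1 + d ?x1 ?x2"
  proof
    assume h: "d v ?x2 = d v ?x1 + d ?x1 ?x2"
    have "d ?x0 ?x2 = Suc (d v ?x2)"
      using geodesic_prolong[OF t(1) V(2,3) inserting_towards_neq t(2)[symmetric] h] .
    then show "d ?x0 ?x2 = d ?x0 ?x1 + d ?x1 ?x2" using h t(2) by simp
  next
    assume "d ?x0 ?x2 = d ?x0 ?x1 + d ?x1 ?x2"
    moreover have "d v ?x2 \<le> d v ?x1 + d ?x1 ?x2" "d ?x0 ?x2 \<le> d ?x0 v + d v ?x2"
      using dist_triangle tV V by blast+
    ultimately show "d v ?x2 = d v ?x1 + d ?x1 ?x2" using dist_edge[OF t(1)] t(2) by linarith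
  qed
  moreover have "insert_at (Suc j) v xs ! Suc j = v" "insert_at (Suc j) v xs ! Suc (Suc j) = ?x1"
    "insert_at (Suc j) v xs ! Suc (Suc (Suc j)) = ?x2"
    using nth_insert_towards i True length_insert_towards by auto
  ultimately show ?thesis using True by (simp add: smooth_def)
qed

lemma proper_insert_towards: "proper (insert_at (Suc j) v xs)"
  unfolding proper_def
proof (intro conjI allI impI)
  show "set (insert_at (Suc j) v xs) \<subseteq> V"
    using xs inserting_towards_in_V unfolding proper_def insert_at_def
    by (auto dest: in_set_takeD in_set_dropD)
  fix i assume i: "Suc i < length (insert_at (Suc j) v xs)"
  consider "Suc i \<le> j" | "i = j" | "i = Suc j" | "Suc (Suc j) \<le> i" by linarith
  then show "insert_at (Suc j) v xs ! i \<noteq> insert_at (Suc j) v xs ! Suc i"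
  proof cases
    case 1 then show ?thesis using nth_insert_towards(1) xs inserting_length by (simp add: proper_def)
  next
    case 2 then show ?thesis using nth_insert_towards(1,2) inserting_towards(1) edge_irrefl by auto
  next
    case 3 then show ?thesis
      using nth_insert_towards(2) nth_insert_towards(3)[of "Suc (Suc j)"] inserting_length
        inserting_towards_neq by simp
  next
    case 4
    then have "insert_at (Suc j) v xs ! i = xs ! (i - 1)" "insert_at (Suc j) v xs ! Suc i = xs ! Suc (i - 1)"
      using nth_insert_towards(3) i length_insert_towards by auto
    moreover have "Suc (i - 1) < length xs" using 4 i length_insert_towards by simp
    ultimately show ?thesis using xs by (simp add: proper_def)
  qed
qed

lemma tlen_insert_towards: "tlen V E (insert_at (Suc j) v xs) = tlen V E xs"
proof -
  have "tlen V E (face (Suc j) (insert_at (Suc j) v xs)) = tlen V E (insert_at (Suc j) v xs)"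
    using tlen_face_eq_iff_smooth proper_insert_towards smooth_insert_towards length_insert_towards
      inserting_length by (simp add: proper_def)
  then show ?thesis using face_insert_at[of "Suc j" xs v] inserting_length by simp
qed

lemma htpy_inserting: "htpy xs = (\<lambda>z. (-1) ^ Suc j * basis (insert_at (Suc j) v xs) z)"
  using ins j v by (simp add: htpy_def)

text \<open>The first \<open>j\<close> faces of the inserted tuple vanish, the next one gives back \<open>xs\<close>, and
  the later ones are insertions into the faces of \<open>xs\<close>.\<close>
lemma bd_basis_insert_towards:
  assumes len: "length xs = Suc k"
  shows "bd_basis V E (Suc k) (insert_at (Suc j) v xs) z = (-1) ^ Suc j * basis xs z
    + (\<Sum>i\<in>{Suc j..<k}. (if smooth xs i then (-1) ^ Suc i else 0) * basis (insert_at (Suc j) v (face i xs)) z)"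
proof -
  let ?x = "insert_at (Suc j) v xs"
  let ?t = "\<lambda>i. (if smooth ?x i then (-1::int)^i else 0) * basis (face i ?x) z"
  have jk: "j < k" using inserting_length len by simp
  have "bd_basis V E (Suc k) ?x z = sum ?t {1..<Suc k}"
    using bd_basis_smooth[OF proper_insert_towards]
      length_insert_towards len by simp
  also have "\<dots> = sum ?t {1..<Suc j} + sum ?t {Suc j..<Suc k}"
    by (rule sum.atLeastLessThan_concat[symmetric]) (use jk in auto)
  also have "sum ?t {Suc j..<Suc k} = ?t (Suc j) + sum (\<lambda>i. ?t (Suc i)) {Suc j..<k}"
    by (subst sum.atLeast_Suc_lessThan) (use jk in \<open>simp_all only: sum.shift_bounds_Suc_ivl\<close>)
  also have "sum ?t {1..<Suc j} = 0"
    using not_smooth_insert_towards_upto by (intro sum.neutral) auto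
  also have "?t (Suc j) = (-1) ^ Suc j * basis xs z"
    using smooth_insert_towards face_insert_at[of "Suc j" xs v] jk len by simp
  also have "sum (\<lambda>i. ?t (Suc i)) {Suc j..<k} =
      (\<Sum>i\<in>{Suc j..<k}. (if smooth xs i then (-1) ^ Suc i else 0) * basis (insert_at (Suc j) v (face i xs)) z)"
  proof (rule sum.cong[OF refl])
    fix i assume i: "i \<in> {Suc j..<k}"
    have "smooth ?x (Suc i) = smooth xs i"
      using smooth_insert_towards_after[of "Suc i"] length_insert_towards i len
      by simp
    moreover have "face (Suc i) ?x = insert_at (Suc j) v (face i xs)"
      by (rule face_Suc_insert_at) (use i len in auto)
    ultimately show "?t (Suc i) = (if smooth xs i then (-1) ^ Suc i else 0) * basis (insert_at (Suc j) v (face i xs)) z"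
      by simp
  qed
  finally show ?thesis by simp
qed

lemma linext_htpy_bd_basis_inserting:
  assumes len: "length xs = Suc k"
  shows "linext htpy (bd_basis V E k xs) z = (\<Sum>i\<in>{Suc j..<k}.
    (if smooth xs i then (-1) ^ i * (-1) ^ Suc j else 0) * basis (insert_at (Suc j) v (face i xs)) z)"
proof -
  let ?t = "\<lambda>i. (if smooth xs i then (-1)^i else 0) * htpy (face i xs) z"
  have jk: "j < k" using inserting_length len by simp
  have "linext htpy (bd_basis V E k xs) z = sum ?t {1..<k}"
    using linext_htpy_bd_basis[OF xs len] by simp
  also have "\<dots> = sum ?t {1..<Suc j} + sum ?t {Suc j..<k}"
    by (rule sum.atLeastLessThan_concat[symmetric]) (use jk in auto)
  also have "sum ?t {1..<Suc j} = 0"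
    using inserting_not_smooth_upto by (intro sum.neutral) auto
  also have "sum ?t {Suc j..<k} = (\<Sum>i\<in>{Suc j..<k}.
    (if smooth xs i then (-1) ^ i * (-1) ^ Suc j else 0) * basis (insert_at (Suc j) v (face i xs)) z)"
  proof (rule sum.cong[OF refl])
    fix i assume i: "i \<in> {Suc j..<k}"
    show "?t i = (if smooth xs i then (-1) ^ i * (-1) ^ Suc j else 0) * basis (insert_at (Suc j) v (face i xs)) z"
    proof (cases "smooth xs i")
      case True
      then show ?thesis
        using inserting_face_after[of i] i len by (simp add: htpy_def)
    qed simp
  qed
  finally show ?thesis by simp
qed

lemma htpy_identity_inserting:
  assumes "length xs = Suc k"
  shows "linext (bd_basis V E (Suc k)) (htpy xs) z + linext htpy (bd_basis V E k xs) z = basis xs z"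
proof -
  let ?s = "(-1::int) ^ Suc j" and ?b = "\<lambda>i. basis (insert_at (Suc j) v (face i xs)) z"
  define S1 where "S1 = (\<Sum>i\<in>{Suc j..<k}. (if smooth xs i then (-1) ^ Suc i else 0) * ?b i)"
  define S2 where "S2 = (\<Sum>i\<in>{Suc j..<k}. (if smooth xs i then (-1) ^ i * ?s else 0) * ?b i)"
  have "linext (bd_basis V E (Suc k)) (htpy xs) z + linext htpy (bd_basis V E k xs) z
    = ?s * (?s * basis xs z + S1) + S2"
    unfolding htpy_inserting linext_smult_basis bd_basis_insert_towards[OF assms]
      linext_htpy_bd_basis_inserting[OF assms] S1_def S2_def ..
  also have "\<dots> = (?s * ?s) * basis xs z + (?s * S1 + S2)" by (simp add: algebra_simps)
  also have "?s * ?s = 1" by (simp flip: power_mult_distrib)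
  also have "?s * S1 + S2 = 0"
    unfolding S1_def S2_def sum_distrib_left sum.distrib[symmetric] by (intro sum.neutral) auto
  finally show ?thesis by simp
qed

end

lemma htpy_identity:
  assumes "xs \<in> Igen V E k l" "k \<noteq> l"
  shows "linext (bd_basis V E (Suc k)) (htpy xs) z + linext htpy (bd_basis V E k xs) z = basis xs z"
proof -
  have xs: "proper xs" "length xs = Suc k" using assms(1) by (auto simp: Igen_iff)
  show ?thesis
  proof (cases "inserting xs")
    case True
    show ?thesis using htpy_identity_inserting[OF xs(1) True refl refl xs(2)] by blast
  next
    case False
    then show ?thesis
      using htpy_identity_not_inserting[OF xs Igen_off_diagonal_reducible[OF assms]] by blast
  qed
qed

lemma htpy_in_Igen:
  assumes "xs \<in> Igen V E k l" "htpy xs z \<noteq> 0"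
  shows "z \<in> Igen V E (Suc k) l"
proof -
  have xs: "proper xs" "length xs = Suc k" "tlen V E xs = l" using assms(1) by (auto simp: Igen_iff)
  have ins: "inserting xs" using assms(2) by (simp add: htpy_def split: if_splits)
  define j where "j = first_reducible xs"
  define v where "v = towards (xs ! j) (xs ! Suc j)"
  note facts = xs(1) ins j_def[symmetric] v_def
  have "z = insert_at (Suc j) v xs"
    using assms(2) by (simp add: htpy_inserting[OF facts] basis_def split: if_splits)
  then show ?thesis
    using proper_insert_towards[OF facts] tlen_insert_towards[OF facts] length_insert_towards[OF facts] xs
    by (simp add: Igen_iff)
qed

lemma linext_htpy_in_MC:
  assumes "c \<in> MC V E k l"
  shows "linext htpy c \<in> MC V E (Suc k) l"
proof -
  have fin: "finite (supp c)" and cI: "\<And>x. x \<in> supp c \<Longrightarrow> x \<in> Igen V E k l"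
    using assms by (auto simp: MC_def supp_def)
  have nz: "\<exists>x\<in>supp c. htpy x z \<noteq> 0" if "linext htpy c z \<noteq> 0" for z
  proof -
    from that obtain x where "x \<in> supp c" "c x * htpy x z \<noteq> 0"
      unfolding linext_def by (auto elim: sum.not_neutral_contains_not_neutral)
    then show ?thesis by auto
  qed
  then have "supp (linext htpy c) \<subseteq> (\<Union>x\<in>supp c. supp (htpy x))" by (auto simp: supp_def)
  moreover have "finite (\<Union>x\<in>supp c. supp (htpy x))" using fin finite_supp_htpy by blast
  ultimately have "finite (supp (linext htpy c))" by (rule finite_subset)
  moreover have "z \<in> Igen V E (Suc k) l" if "linext htpy c z \<noteq> 0" for z
    using nz[OF that] cI htpy_in_Igen by blast
  ultimately show ?thesis by (simp add: MC_def supp_def)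
qed

lemma bd_linext_htpy:
  assumes c: "c \<in> MC V E k l" and cycle: "bd V E k l c = (\<lambda>_. 0)" and "k \<noteq> l"
  shows "bd V E (Suc k) l (linext htpy c) = c"
proof
  fix z
  have fin: "finite (supp c)" and cI: "\<And>x. x \<in> supp c \<Longrightarrow> x \<in> Igen V E k l"
    using c by (auto simp: MC_def supp_def)
  have "bd V E (Suc k) l (linext htpy c) z = linext (\<lambda>x. linext (bd_basis V E (Suc k)) (htpy x)) c z"
    unfolding bd_eq_linext by (rule linext_linext[OF fin finite_supp_htpy])
  also have "\<dots> = linext basis c z - linext (\<lambda>x. linext htpy (bd_basis V E k x)) c z"
  proof -
    have "linext (bd_basis V E (Suc k)) (htpy x) z = basis x z - linext htpy (bd_basis V E k x) z"
      if "x \<in> supp c" for x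
      using htpy_identity[OF cI[OF that] \<open>k \<noteq> l\<close>] by (simp add: eq_diff_eq)
    then show ?thesis
      unfolding linext_def by (simp add: right_diff_distrib sum_subtractf[symmetric] cong: sum.cong)
  qed
  also have "linext (\<lambda>x. linext htpy (bd_basis V E k x)) c z = linext htpy (bd V E k l c) z"
    unfolding bd_eq_linext by (rule linext_linext[OF fin finite_supp_bd_basis, symmetric])
  finally show "bd V E (Suc k) l (linext htpy c) z = c z"
    using cycle linext_zero linext_basis_id[OF fin] by simp
qed

lemma MH_zero_off_diagonal: "k \<noteq> l \<Longrightarrow> MH_zero V E k l"
  unfolding MH_zero_def using linext_htpy_in_MC bd_linext_htpy by blast

end

theorem proposition3p1:
  fixes V :: "'a set" and E :: "'a \<Rightarrow> 'a \<Rightarrow> bool"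
  assumes "is_tree V E"
  shows "diagonal V E"
proof -
  interpret tree_graph V E using tree_graph_if_is_tree[OF assms] .
  show ?thesis unfolding diagonal_def using MH_zero_off_diagonal by blast
qed

end
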